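(* For every $s\in\{1,\dots,n-1\}$, every $A\in M_{s+1,n-s}(\mathbb R)$ and every $\mathbf w\in\mathcal S_{n+1,n}$, one has $\max_{I\ni0,\,|I|=n}\|\mathbf c^+_{I,\mathbf w}+A\mathbf c^-_{I,\mathbf w}\|\ge1$.
   Context: Sup-norms. Let $\mathbf e_0,\dots,\mathbf e_n$ be the standard basis of $\mathbb R^{n+1}$, $\mathbf e_I=\mathbf e_{i_1}\wedge\dots\wedge\mathbf e_{i_j}$ for $I=\{i_1<\dots<i_j\}\subset\{0,\dots,n\}$, and write $\mathbf w\in\bigwedge^j\mathbb R^{n+1}$ as $\sum_{|I|=j}w_I\mathbf e_I$. $\mathcal S_{n+1,j}$ is the set of elements $\mathbf v_1\wedge\dots\wedge\mathbf v_j$ with $\mathbf v_1,\dots,\mathbf v_j$ a basis of a rank-$j$ subgroup of $\mathbb Z^{n+1}$. For $I\ni0$, $i\notin I$, $l(I,i)$ is the number of elements of $I$ strictly between $0$ and $i$. For $I\ni0$, $|I|=j$: $\mathbf c_{I,\mathbf w}=w_I\mathbf e_0+\sum_{i\in\{1,\dots,n\}\setminus I}(-1)^{l(I,i)}w_{I\cup\{i\}\setminus\{0\}}\mathbf e_i$; $\mathbf c^+_{I,\mathbf w}\in\mathbb R^{s+1}$ is its vector of coordinates $0,\dots,s$ and $\mathbf c^-_{I,\mathbf w}\in\mathbb R^{n-s}$ its vector of coordinates $s+1,\dots,n$. *)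

theory Defs
  imports "HOL-Analysis.Analysis"
begin

text \<open>Integer vectors of Z^(n+1) are functions nat => int, only coordinates 0..n matter.
  A family of j vectors is v :: nat => nat => int, v k i = i-th coordinate of the (k+1)-th vector, k < j.\<close>

text \<open>The family v_1..v_j is a basis of the subgroup it generates, which then has rank j,
  i.e. the vectors are Z-linearly independent.\<close>
definition int_lin_indep :: "nat \<Rightarrow> nat \<Rightarrow> (nat \<Rightarrow> nat \<Rightarrow> int) \<Rightarrow> bool" where
  "int_lin_indep n j v \<longleftrightarrow>
     (\<forall>a :: nat \<Rightarrow> int. (\<forall>i\<le>n. (\<Sum>k<j. a k * v k i) = 0) \<longrightarrow> (\<forall>k<j. a k = 0))"

definition ldet :: "nat \<Rightarrow> (nat \<Rightarrow> nat \<Rightarrow> real) \<Rightarrow> real" where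
  "ldet j M = (\<Sum>p\<in>{p. p permutes {..<j}}. of_int (sign p) * (\<Prod>l<j. M l (p l)))"

text \<open>Coordinate w_I of v_1 \<and> ... \<and> v_j on e_I, I = {i_1 < ... < i_j}: det (v_k(i_l))_{k,l}.\<close>
definition wedge_coord :: "nat \<Rightarrow> (nat \<Rightarrow> nat \<Rightarrow> int) \<Rightarrow> nat set \<Rightarrow> real" where
  "wedge_coord j v I = ldet j (\<lambda>k l. real_of_int (v k (sorted_list_of_set I ! l)))"

text \<open>Multivectors in \<And>^j R^(n+1) are represented by their coordinate function on subsets
  (zero outside the j-subsets of {0..n}).  S_{n+1,j}:\<close>
definition S_set :: "nat \<Rightarrow> nat \<Rightarrow> (nat set \<Rightarrow> real) set" where
  "S_set n j = {w. \<exists>v. int_lin_indep n j v \<and>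
       w = (\<lambda>I. if I \<subseteq> {0..n} \<and> card I = j then wedge_coord j v I else 0)}"

definition lcount :: "nat set \<Rightarrow> nat \<Rightarrow> nat" where
  "lcount I i = card {k\<in>I. 0 < k \<and> k < i}"

definition cvec :: "nat \<Rightarrow> nat set \<Rightarrow> (nat set \<Rightarrow> real) \<Rightarrow> nat \<Rightarrow> real" where
  "cvec n I w i =
     (if i = 0 then w I
      else if i \<in> {1..n} - I then (-1) ^ lcount I i * w (I \<union> {i} - {0})
      else 0)"

text \<open>Sup norm of c^+ + A c^- where c^+ = (c_0..c_s), c^- = (c_{s+1}..c_n), A an (s+1) x (n-s) matrix.\<close>
definition supnorm_plus :: "nat \<Rightarrow> nat \<Rightarrow> (nat \<Rightarrow> nat \<Rightarrow> real) \<Rightarrow> (nat \<Rightarrow> real) \<Rightarrow> real" where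
  "supnorm_plus n s A c = Max ((\<lambda>r. \<bar>c r + (\<Sum>k<n-s. A r k * c (s + 1 + k))\<bar>) ` {0..s})"

end

theory Submission
  imports Defs "Jordan_Normal_Form.DL_Rank" "HOL-Combinatorics.Permutations"
begin

text \<open>The coordinates of \<open>w\<close> are maximal minors of an integer matrix with linearly
  independent rows, so they are integers and not all zero. Let \<open>w'\<close> be the coordinate of
  \<open>w\<close> on \<open>{1..n}\<close>. For \<open>0 \<in> I\<close> and \<open>i \<notin> I\<close>, the set \<open>I \<union> {i} - {0}\<close> can only be
  \<open>{1..n}\<close>, so \<open>c\<^sub>I\<close> is \<open>w\<^sub>I\<close> at 0, \<open>\<plusminus>w'\<close> at the indices in \<open>{1..n} - I\<close>, and 0 elsewhere.
  If \<open>w' \<noteq> 0\<close>, take \<open>I = {0..n} - {1}\<close>; otherwise take \<open>I\<close> with \<open>w\<^sub>I \<noteq> 0\<close>, which forces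
  \<open>0 \<in> I\<close>. Either way \<open>c\<^sub>I\<close> is supported on the coordinates 0 and 1, so \<open>c\<^sup>- = 0\<close>
  since \<open>s \<ge> 1\<close>, while \<open>c\<^sup>+\<close> has a nonzero integer entry.\<close>

definition minor_mat :: "nat \<Rightarrow> (nat \<Rightarrow> nat \<Rightarrow> int) \<Rightarrow> nat list \<Rightarrow> int mat" where
  "minor_mat j v cs = mat j j (\<lambda>(k, l). v k (cs ! l))"

lemma ldet_of_int:
  "ldet j (\<lambda>k l. real_of_int (X k l)) = real_of_int (det (mat j j (\<lambda>(k, l). X k l)))"
proof -
  have "det (mat j j (\<lambda>(k, l). X k l)) =
      (\<Sum>p\<in>{p. p permutes {0..<j}}. of_int (sign p) * (\<Prod>i = 0..<j. X i (p i)))"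
    by (subst det_def'[of _ j]) (auto intro!: sum.cong prod.cong simp: permutes_in_image)
  then show ?thesis
    unfolding ldet_def by (simp add: of_int_sum of_int_prod atLeast0LessThan)
qed

lemma wedge_coord_eq_det_minor_mat:
  "wedge_coord j v I = real_of_int (det (minor_mat j v (sorted_list_of_set I)))"
  unfolding wedge_coord_def minor_mat_def by (rule ldet_of_int)

lemma det_minor_mat_permute_list:
  assumes p: "p permutes {..<length cs}" and len: "length cs = j"
  shows "det (minor_mat j v (permute_list p cs)) = of_int (sign p) * det (minor_mat j v cs)"
proof -
  let ?M = "minor_mat j v cs"
  have M: "transpose_mat ?M \<in> carrier_mat j j"
    by (simp add: minor_mat_def)
  have p': "p permutes {0..<j}"
    using p len by (simp add: lessThan_atLeast0)
  have "minor_mat j v (permute_list p cs) =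
      transpose_mat (mat j j (\<lambda>(i, k). transpose_mat ?M $$ (p i, k)))"
    using p len permutes_in_image[OF p]
    by (intro eq_matI) (auto simp: minor_mat_def permute_list_nth)
  then have "det (minor_mat j v (permute_list p cs)) =
      det (mat j j (\<lambda>(i, k). transpose_mat ?M $$ (p i, k)))"
    by (simp add: det_transpose[of _ j])
  also have "\<dots> = of_int (sign p) * det ?M"
    using det_permute_rows[OF M p'] det_transpose[of ?M j] by (simp add: minor_mat_def)
  finally show ?thesis .
qed

lemma det_minor_mat_sorted_eq_0_iff:
  assumes "distinct cs" and "length cs = j"
  shows "det (minor_mat j v (sorted_list_of_set (set cs))) = 0 \<longleftrightarrow> det (minor_mat j v cs) = 0"
proof -
  have "mset (sorted_list_of_set (set cs)) = mset cs"
    using assms(1) by (simp add: set_eq_iff_mset_eq_distinct[symmetric])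
  then obtain p where p: "p permutes {..<length cs}" "permute_list p cs = sorted_list_of_set (set cs)"
    by (rule mset_eq_permutation)
  have "det (minor_mat j v (sorted_list_of_set (set cs))) = of_int (sign p) * det (minor_mat j v cs)"
    using det_minor_mat_permute_list[OF p(1) assms(2)] p(2) by simp
  then show ?thesis
    by simp
qed

text \<open>If some \<open>j\<close>-minor, on columns \<open>L\<close>, is nonzero, the cofactors of the
  last column of the matrix on columns \<open>L @ [i]\<close> give the relation, with that minor as last
  coefficient: the determinant vanishes for every \<open>i \<in> C\<close>, by hypothesis or because
  of two equal columns.\<close>
lemma int_relation_if_minors_vanish:
  fixes v :: "nat \<Rightarrow> nat \<Rightarrow> int"
  assumes "\<forall>cs. distinct cs \<and> length cs = j \<and> set cs \<subseteq> C \<longrightarrow> det (minor_mat j v cs) = 0"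
  shows "\<exists>a. (\<forall>i\<in>C. (\<Sum>k<j. a k * v k i) = 0) \<and> (\<exists>k<j. a k \<noteq> 0)"
  using assms
proof (induction j)
  case 0
  then have "det (minor_mat 0 v []) = 0" by auto
  then show ?case by (simp add: minor_mat_def det_def)
next
  case (Suc j)
  show ?case
  proof (cases "\<forall>cs. distinct cs \<and> length cs = j \<and> set cs \<subseteq> C \<longrightarrow> det (minor_mat j v cs) = 0")
    case True
    then obtain a where "\<forall>i\<in>C. (\<Sum>k<j. a k * v k i) = 0" "\<exists>k<j. a k \<noteq> 0"
      using Suc.IH by blast
    then show ?thesis
      by (intro exI[of _ "a(j := 0)"]) auto
  next
    case False
    then obtain L where L: "distinct L" "length L = j" "set L \<subseteq> C" "det (minor_mat j v L) \<noteq> 0"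
      by blast
    define a where
      "a k = (-1) ^ (k + j) * det (mat j j (\<lambda>(k', l). v (if k' < k then k' else Suc k') (L ! l)))"
      for k
    have "(\<Sum>k<Suc j. a k * v k i) = 0" if i: "i \<in> C" for i
    proof -
      let ?M = "minor_mat (Suc j) v (L @ [i])"
      have M: "?M \<in> carrier_mat (Suc j) (Suc j)"
        by (simp add: minor_mat_def)
      have delete: "mat_delete ?M k j = mat j j (\<lambda>(k', l). v (if k' < k then k' else Suc k') (L ! l))"
        if "k < Suc j" for k
        using L(2) that by (intro eq_matI) (auto simp: mat_delete_def minor_mat_def nth_append)
      have "det ?M = (\<Sum>k<Suc j. ?M $$ (k, j) * cofactor ?M k j)"
        by (rule laplace_expansion_column[OF M]) simp
      also have "\<dots> = (\<Sum>k<Suc j. a k * v k i)"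
        by (intro sum.cong refl) (simp add: cofactor_def delete a_def, simp add: minor_mat_def nth_append L(2))
      finally have expansion: "det ?M = (\<Sum>k<Suc j. a k * v k i)" .
      have "det ?M = 0"
      proof (cases "i \<in> set L")
        case True
        then obtain l where "l < j" "L ! l = i"
          using L(2) by (auto simp: in_set_conv_nth)
        then show ?thesis
          using L by (intro det_identical_cols[OF M, of l j]) (auto simp: minor_mat_def nth_append)
      next
        case False
        then show ?thesis
          using Suc.prems L i by auto
      qed
      then show ?thesis
        using expansion by simp
    qed
    moreover have "mat j j (\<lambda>(k', l). v (if k' < j then k' else Suc k') (L ! l)) = minor_mat j v L"
      by (intro eq_matI) (auto simp: minor_mat_def)
    then have "a j \<noteq> 0"
      using L(4) by (simp add: a_def)
    ultimately show ?thesis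
      by blast
  qed
qed

lemma wedge_coord_nonzero_if_int_lin_indep:
  assumes "int_lin_indep n j v"
  obtains J where "J \<subseteq> {0..n}" "card J = j" "wedge_coord j v J \<noteq> 0"
proof -
  have "\<exists>J. J \<subseteq> {0..n} \<and> card J = j \<and> wedge_coord j v J \<noteq> 0"
  proof (rule ccontr)
    assume no_minor: "\<nexists>J. J \<subseteq> {0..n} \<and> card J = j \<and> wedge_coord j v J \<noteq> 0"
    have "det (minor_mat j v cs) = 0"
      if cs: "distinct cs \<and> length cs = j \<and> set cs \<subseteq> {..n}" for cs
    proof -
      have "set cs \<subseteq> {0..n}" "card (set cs) = j"
        using cs by (auto simp: distinct_card)
      then have "wedge_coord j v (set cs) = 0"
        using no_minor by blast
      then have "det (minor_mat j v (sorted_list_of_set (set cs))) = 0"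
        by (simp add: wedge_coord_eq_det_minor_mat)
      then show ?thesis
        using det_minor_mat_sorted_eq_0_iff[of cs j v] cs by blast
    qed
    then obtain a where "\<forall>i\<in>{..n}. (\<Sum>k<j. a k * v k i) = 0" "\<exists>k<j. a k \<noteq> 0"
      using int_relation_if_minors_vanish[of j "{..n}" v] by blast
    then show False
      using assms unfolding int_lin_indep_def by (meson atMost_iff)
  qed
  then show ?thesis
    using that by blast
qed

lemma S_set_coord_Ints:
  assumes "w \<in> S_set n j"
  shows "w I \<in> \<int>"
proof -
  obtain v where "w = (\<lambda>I. if I \<subseteq> {0..n} \<and> card I = j then wedge_coord j v I else 0)"
    using assms unfolding S_set_def by blast
  then show ?thesis
    by (simp add: wedge_coord_eq_det_minor_mat)
qed

lemma S_set_coord_nonzero: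
  assumes "w \<in> S_set n j"
  obtains J where "J \<subseteq> {0..n}" "card J = j" "w J \<noteq> 0"
proof -
  obtain v where v: "int_lin_indep n j v"
    and w: "w = (\<lambda>I. if I \<subseteq> {0..n} \<and> card I = j then wedge_coord j v I else 0)"
    using assms unfolding S_set_def by blast
  obtain J where "J \<subseteq> {0..n}" "card J = j" "wedge_coord j v J \<noteq> 0"
    using wedge_coord_nonzero_if_int_lin_indep[OF v] .
  then show ?thesis
    using that[of J] by (simp add: w)
qed

lemma insert_minus_zero_eq_atLeastAtMost:
  assumes "I \<subseteq> {0..n}" "0 \<in> I" "card I = n" "i \<in> {1..n} - I"
  shows "I \<union> {i} - {0} = {1..n}"
proof (rule card_subset_eq)
  have "finite I"
    using assms(1) finite_subset by blast
  then have "card (I - {0}) = n - 1"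
    using assms(2,3) by simp
  moreover have "I \<union> {i} - {0} = insert i (I - {0})"
    using assms(4) by auto
  ultimately show "card (I \<union> {i} - {0}) = card {1..n}"
    using assms(4) \<open>finite I\<close> by simp
  show "I \<union> {i} - {0} \<subseteq> {1..n}"
    using assms(1,4) by fastforce
qed simp

lemma cvec_pos_coord:
  assumes "I \<subseteq> {0..n}" "0 \<in> I" "card I = n" "0 < i"
  shows "cvec n I w i = (if i \<in> {1..n} - I then (-1) ^ lcount I i * w {1..n} else 0)"
  using assms(4) insert_minus_zero_eq_atLeastAtMost[OF assms(1-3)] unfolding cvec_def by auto

lemma cvec_concentrated_at_0_1:
  assumes "w \<in> S_set n n" and "1 \<le> n"
  obtains I r where "I \<subseteq> {0..n}" "0 \<in> I" "card I = n" "r \<le> 1"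
    "\<forall>i>1. cvec n I w i = 0" "1 \<le> \<bar>cvec n I w r\<bar>"
proof (cases "w {1..n} = 0")
  case False
  let ?I = "{0..n} - {1}"
  have I: "?I \<subseteq> {0..n}" "0 \<in> ?I" "card ?I = n"
    using assms(2) by auto
  have "{1..n} - ?I = {1}"
    using assms(2) by auto
  then have "cvec n ?I w i = 0" if "1 < i" for i
    using cvec_pos_coord[OF I, of i w] that by simp
  moreover have "\<bar>cvec n ?I w 1\<bar> = \<bar>w {1..n}\<bar>"
    using cvec_pos_coord[OF I, of 1 w] assms(2) by (simp add: abs_mult)
  moreover have "1 \<le> \<bar>w {1..n}\<bar>"
    using Ints_nonzero_abs_ge1[OF S_set_coord_Ints[OF assms(1)] False] .
  ultimately show ?thesis
    using that[OF I, of 1] by simp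
next
  case True
  obtain J where J: "J \<subseteq> {0..n}" "card J = n" "w J \<noteq> 0"
    using S_set_coord_nonzero[OF assms(1)] by blast
  have "0 \<in> J"
  proof (rule ccontr)
    assume "0 \<notin> J"
    then have "J \<subseteq> {0..n} - {0}"
      using J(1) by blast
    also have "{0..n} - {0} = {1..n}"
      by auto
    finally have "J \<subseteq> {1..n}" .
    then have "J = {1..n}"
      using J(2) by (intro card_subset_eq) auto
    then show False
      using True J(3) by simp
  qed
  then have "cvec n J w i = 0" if "1 < i" for i
    using cvec_pos_coord[OF J(1) _ J(2), of i w] that unfolding True by simp
  moreover have "1 \<le> \<bar>cvec n J w 0\<bar>"
    using Ints_nonzero_abs_ge1[OF S_set_coord_Ints[OF assms(1)] J(3)] by (simp add: cvec_def)
  ultimately show ?thesis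
    using that[OF J(1) \<open>0 \<in> J\<close> J(2), of 0] by simp
qed

lemma abs_le_supnorm_plus:
  assumes "r \<le> s" and "\<forall>i>s. c i = 0"
  shows "\<bar>c r\<bar> \<le> supnorm_plus n s A c"
proof -
  have "\<bar>c r\<bar> = \<bar>c r + (\<Sum>k<n-s. A r k * c (s + 1 + k))\<bar>"
    using assms(2) by simp
  also have "\<dots> \<le> supnorm_plus n s A c"
    unfolding supnorm_plus_def by (rule Max_ge) (use assms(1) in auto)
  finally show ?thesis .
qed

theorem lemma4p5:
  fixes n s :: nat and A :: "nat \<Rightarrow> nat \<Rightarrow> real" and w :: "nat set \<Rightarrow> real"
  assumes "1 \<le> s" and "s \<le> n - 1" and "w \<in> S_set n n"
  shows "Max ((\<lambda>I. supnorm_plus n s A (cvec n I w)) ` {I. I \<subseteq> {0..n} \<and> 0 \<in> I \<and> card I = n}) \<ge> 1"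
proof -
  let ?\<I> = "{I. I \<subseteq> {0..n} \<and> 0 \<in> I \<and> card I = n}"
  have "1 \<le> n"
    using assms(1,2) by linarith
  obtain I r where I: "I \<subseteq> {0..n}" "0 \<in> I" "card I = n"
    and r: "r \<le> 1" "\<forall>i>1. cvec n I w i = 0" "1 \<le> \<bar>cvec n I w r\<bar>"
    using cvec_concentrated_at_0_1[OF assms(3) \<open>1 \<le> n\<close>] .
  have "finite ?\<I>"
    by (rule finite_subset[of _ "Pow {0..n}"]) auto
  have "1 \<le> \<bar>cvec n I w r\<bar>"
    using r(3) .
  also have "\<dots> \<le> supnorm_plus n s A (cvec n I w)"
    using r(1,2) assms(1) by (intro abs_le_supnorm_plus) auto
  also have "\<dots> \<le> Max ((\<lambda>I. supnorm_plus n s A (cvec n I w)) ` ?\<I>)"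
    using \<open>finite ?\<I>\<close> I by (intro Max_ge) auto
  finally show ?thesis .
qed

end
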